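(* The function $F:\Delta^K\to\mathbb{R}^{K+1}$ described in the context is $\lambda(5+\sqrt K)$-Lipschitz continuous with respect to the Euclidean norm, i.e., \[ \|F(x)-F(y)\|\le\lambda(5+\sqrt K)\|x-y\|\qquad\text{for all }x,y\in\Delta^K. \]
   Context: Parameters: integer $K\ge 1$, $\lambda>0$, $\mu\in(0,1]$, $p_1,\dots,p_K\in[0,1]$. $\Delta^K=\{x\in\mathbb{R}^{K+1}:\sum_{k=0}^K x_k=1,\ x_k\ge0\}$ (coordinates indexed from $0$). $F$ is given by $F_0(x)=-\lambda x_0\sum_{k=1}^K(\frac{\mu}{K}+(1-\mu)x_k)p_k$ and, for $k=1,\dots,K$, $F_k(x)=\lambda x_0(\frac{\mu}{K}+(1-\mu)x_k)p_k+\lambda x_k\sum_{k'=1}^K(p_k-p_{k'})x_{k'}$. *)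

theory Defs
  imports "HOL-Analysis.Analysis"
begin

text \<open>Points of R^(K+1) are represented as functions nat => real, coordinates 0..K.\<close>

definition std_simplex_K :: "nat \<Rightarrow> (nat \<Rightarrow> real) set" where
  "std_simplex_K K = {x. (\<Sum>k=0..K. x k) = 1 \<and> (\<forall>k\<in>{0..K}. x k \<ge> 0)}"

definition enorm :: "nat \<Rightarrow> (nat \<Rightarrow> real) \<Rightarrow> real" where
  "enorm K v = sqrt (\<Sum>k=0..K. (v k)^2)"

definition Fmap :: "nat \<Rightarrow> real \<Rightarrow> real \<Rightarrow> (nat \<Rightarrow> real) \<Rightarrow> (nat \<Rightarrow> real) \<Rightarrow> nat \<Rightarrow> real" where
  "Fmap K lam mu p x k =
     (if k = 0 then - lam * x 0 * (\<Sum>j=1..K. (mu / real K + (1 - mu) * x j) * p j)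
      else lam * x 0 * (mu / real K + (1 - mu) * x k) * p k
           + lam * x k * (\<Sum>j=1..K. (p k - p j) * x j))"

end

theory Submission
  imports Defs
begin

text \<open>Write \<open>d = x - y\<close> and \<open>P = \<Sum>j\<ge>1. p\<^sub>j d\<^sub>j\<close>. Expanding every product in \<open>F(x) - F(y)\<close>
  by the product rule, and using \<open>\<Sum>j\<ge>1. d\<^sub>j = -d\<^sub>0\<close>, splits the difference into three vectors:
  \<open>d\<^sub>0\<close> times a vector of \<open>\<ell>\<^sub>1\<close>-norm at most 3, \<open>d\<close> times a diagonal multiplier bounded by 2, and
  \<open>P\<close> times a vector of \<open>\<ell>\<^sub>1\<close>-norm at most 1. Since \<open>\<ell>\<^sub>2 \<le> \<ell>\<^sub>1\<close>, \<open>\<bar>d\<^sub>0\<bar> \<le> \<parallel>d\<parallel>\<close> and, by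
  Cauchy-Schwarz, \<open>\<bar>P\<bar> \<le> \<surd>K \<parallel>d\<parallel>\<close>, the three contribute \<open>3 + 2 + \<surd>K\<close> times \<open>\<parallel>d\<parallel>\<close>.\<close>

lemma L2_set_abs: "L2_set (\<lambda>i. \<bar>f i\<bar>) A = L2_set f A"
  unfolding L2_set_def by simp

lemma L2_set_scale: "L2_set (\<lambda>i. c * f i) A = \<bar>c\<bar> * L2_set f A"
  unfolding L2_set_def
  by (simp add: power_mult_distrib real_sqrt_mult flip: sum_distrib_left)

lemma L2_set_mono_abs:
  assumes "\<And>i. i \<in> A \<Longrightarrow> \<bar>f i\<bar> \<le> \<bar>g i\<bar>"
  shows "L2_set f A \<le> L2_set g A"
proof -
  have "L2_set (\<lambda>i. \<bar>f i\<bar>) A \<le> L2_set (\<lambda>i. \<bar>g i\<bar>) A"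
    by (rule L2_set_mono) (use assms in auto)
  thus ?thesis by (simp add: L2_set_abs)
qed

lemma L2_set_subset_le:
  assumes "finite B" "A \<subseteq> B"
  shows "L2_set f A \<le> L2_set f B"
  unfolding L2_set_def using assms by (intro real_sqrt_le_mono sum_mono2) auto

lemma abs_le_L2_set: "finite A \<Longrightarrow> i \<in> A \<Longrightarrow> \<bar>f i\<bar> \<le> L2_set f A"
  using member_le_L2_set[of A i "\<lambda>i. \<bar>f i\<bar>"] by (simp add: L2_set_abs)

lemma L2_set_scale_le:
  assumes "\<bar>c\<bar> \<le> C" "(\<Sum>i\<in>A. \<bar>f i\<bar>) \<le> B"
  shows "L2_set (\<lambda>i. c * f i) A \<le> C * B"
proof -
  have "L2_set (\<lambda>i. c * f i) A \<le> \<bar>c\<bar> * (\<Sum>i\<in>A. \<bar>f i\<bar>)"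
    unfolding L2_set_scale by (intro mult_left_mono L2_set_le_sum_abs) simp
  also have "\<dots> \<le> C * B"
    using assms by (intro mult_mono) (auto intro: sum_nonneg)
  finally show ?thesis .
qed

lemma L2_set_mult_le:
  assumes "\<And>i. i \<in> A \<Longrightarrow> \<bar>g i\<bar> \<le> C" "0 \<le> C"
  shows "L2_set (\<lambda>i. f i * g i) A \<le> C * L2_set f A"
proof -
  have "L2_set (\<lambda>i. f i * g i) A \<le> L2_set (\<lambda>i. C * f i) A"
    using assms by (intro L2_set_mono_abs) (simp add: abs_mult mult.commute[of C] mult_left_mono)
  thus ?thesis using assms(2) by (simp add: L2_set_scale)
qed

lemma abs_sum_mult_le_L2_set: "\<bar>\<Sum>i\<in>A. f i * g i\<bar> \<le> L2_set f A * L2_set g A"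
  by (rule order_trans[OF sum_abs]) (simp add: abs_mult L2_set_mult_ineq)

lemma enorm_eq_L2_set: "enorm K v = L2_set v {0..K}"
  by (simp add: enorm_def L2_set_def)

lemma std_simplex_K_nonneg: "x \<in> std_simplex_K K \<Longrightarrow> k \<le> K \<Longrightarrow> 0 \<le> x k"
  by (simp add: std_simplex_K_def)

lemma std_simplex_K_le_one:
  assumes "x \<in> std_simplex_K K" "k \<le> K"
  shows "x k \<le> 1"
  using assms member_le_sum[of k "{0..K}" x] by (auto simp: std_simplex_K_def)

lemma std_simplex_K_sum_tail: "x \<in> std_simplex_K K \<Longrightarrow> (\<Sum>k=1..K. x k) = 1 - x 0"
  by (simp add: std_simplex_K_def sum.atLeast_Suc_atMost)

definition adopt_weight :: "nat \<Rightarrow> real \<Rightarrow> (nat \<Rightarrow> real) \<Rightarrow> nat \<Rightarrow> real" where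
  "adopt_weight K mu x k = mu / real K + (1 - mu) * x k"

definition payoff_gap :: "nat \<Rightarrow> (nat \<Rightarrow> real) \<Rightarrow> (nat \<Rightarrow> real) \<Rightarrow> nat \<Rightarrow> real" where
  "payoff_gap K p x k = (\<Sum>j=1..K. (p k - p j) * x j)"

lemma Fmap_altdef:
  "Fmap K lam mu p x k =
     (if k = 0 then - lam * x 0 * (\<Sum>j=1..K. adopt_weight K mu x j * p j)
      else lam * x 0 * adopt_weight K mu x k * p k + lam * x k * payoff_gap K p x k)"
  by (simp add: Fmap_def adopt_weight_def payoff_gap_def)

definition d0_coeff ::
  "nat \<Rightarrow> real \<Rightarrow> (nat \<Rightarrow> real) \<Rightarrow> (nat \<Rightarrow> real) \<Rightarrow> (nat \<Rightarrow> real) \<Rightarrow> nat \<Rightarrow> real" where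
  "d0_coeff K mu p x y k =
     (if k = 0 then - (\<Sum>j=1..K. adopt_weight K mu x j * p j)
      else p k * (adopt_weight K mu x k - y k))"

definition diag_coeff ::
  "nat \<Rightarrow> real \<Rightarrow> (nat \<Rightarrow> real) \<Rightarrow> (nat \<Rightarrow> real) \<Rightarrow> (nat \<Rightarrow> real) \<Rightarrow> nat \<Rightarrow> real" where
  "diag_coeff K mu p x y k = (if k = 0 then 0 else (1 - mu) * y 0 * p k + payoff_gap K p x k)"

definition payoff_coeff :: "real \<Rightarrow> (nat \<Rightarrow> real) \<Rightarrow> nat \<Rightarrow> real" where
  "payoff_coeff mu y k = - (if k = 0 then (1 - mu) * y 0 else y k)"

lemma Fmap_diff_decomposition:
  assumes "(\<Sum>k=0..K. x k) = (\<Sum>k=0..K. y k)"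
  shows "Fmap K lam mu p x k - Fmap K lam mu p y k
     = lam * ((x 0 - y 0) * d0_coeff K mu p x y k + (x k - y k) * diag_coeff K mu p x y k
              + (\<Sum>j=1..K. p j * (x j - y j)) * payoff_coeff mu y k)"
proof -
  define P where "P = (\<Sum>j=1..K. p j * (x j - y j))"
  define S where "S z = (\<Sum>j=1..K. adopt_weight K mu z j * p j)" for z
  have Sy: "S y = S x - (1 - mu) * P"
    unfolding S_def P_def
    by (simp add: adopt_weight_def algebra_simps sum_subtractf sum_distrib_left flip: sum.distrib)
  have tail: "(\<Sum>j=1..K. x j - y j) = - (x 0 - y 0)"
    using assms by (simp add: sum.atLeast_Suc_atMost sum_subtractf)
  have "payoff_gap K p x k - payoff_gap K p y k = p k * (\<Sum>j=1..K. x j - y j) - P"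
    unfolding P_def
    by (simp add: payoff_gap_def algebra_simps sum_subtractf sum_distrib_left flip: sum.distrib)
  hence gap_y: "payoff_gap K p y k = payoff_gap K p x k + p k * (x 0 - y 0) + P"
    unfolding tail by (simp add: algebra_simps)
  have "Fmap K lam mu p x k - Fmap K lam mu p y k
     = lam * ((x 0 - y 0) * d0_coeff K mu p x y k + (x k - y k) * diag_coeff K mu p x y k
              + P * payoff_coeff mu y k)"
  proof (cases "k = 0")
    case True
    then have "Fmap K lam mu p x k - Fmap K lam mu p y k = - lam * x 0 * S x + lam * y 0 * S y"
      by (simp add: Fmap_altdef S_def)
    moreover have "d0_coeff K mu p x y 0 = - S x"
      by (simp add: d0_coeff_def S_def)
    ultimately show ?thesis
      using True by (simp add: Sy diag_coeff_def payoff_coeff_def algebra_simps)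
  next
    case False
    then show ?thesis
      by (simp add: Fmap_altdef gap_y d0_coeff_def diag_coeff_def payoff_coeff_def
          adopt_weight_def algebra_simps diff_divide_distrib)
  qed
  then show ?thesis
    unfolding P_def .
qed

lemma adopt_weight_nonneg: "0 \<le> mu \<Longrightarrow> mu \<le> 1 \<Longrightarrow> 0 \<le> x k \<Longrightarrow> 0 \<le> adopt_weight K mu x k"
  by (simp add: adopt_weight_def)

lemma sum_adopt_weight_le_one:
  assumes "0 \<le> mu" "mu \<le> 1" "x \<in> std_simplex_K K"
  shows "(\<Sum>k=1..K. adopt_weight K mu x k) \<le> 1"
proof -
  have "(\<Sum>k=1..K. adopt_weight K mu x k) = real K * (mu / real K) + (1 - mu) * (1 - x 0)"
    using std_simplex_K_sum_tail[OF assms(3)]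
    by (simp add: adopt_weight_def sum.distrib flip: sum_distrib_left)
  also have "\<dots> \<le> mu + (1 - mu) * 1"
    using assms std_simplex_K_nonneg[of x K 0]
    by (intro add_mono mult_left_mono) auto
  finally show ?thesis by simp
qed

lemma abs_payoff_gap_le_one:
  assumes "\<forall>k\<in>{1..K}. 0 \<le> p k \<and> p k \<le> 1" "x \<in> std_simplex_K K" "k \<in> {1..K}"
  shows "\<bar>payoff_gap K p x k\<bar> \<le> 1"
proof -
  have "\<bar>payoff_gap K p x k\<bar> \<le> (\<Sum>j=1..K. \<bar>(p k - p j) * x j\<bar>)"
    unfolding payoff_gap_def by (rule sum_abs)
  also have "\<dots> \<le> (\<Sum>j=1..K. x j)"
  proof (rule sum_mono)
    fix j assume j: "j \<in> {1..K}"
    have "0 \<le> p k" "p k \<le> 1" "0 \<le> p j" "p j \<le> 1"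
      using assms(1,3) j by auto
    hence "\<bar>p k - p j\<bar> \<le> 1" by linarith
    moreover have "0 \<le> x j"
      using assms(2) j by (auto intro: std_simplex_K_nonneg)
    ultimately show "\<bar>(p k - p j) * x j\<bar> \<le> x j"
      by (simp add: abs_mult mult_left_le_one_le)
  qed
  also have "\<dots> \<le> 1"
    using std_simplex_K_sum_tail[OF assms(2)] std_simplex_K_nonneg[OF assms(2), of 0] by simp
  finally show ?thesis .
qed

lemma sum_abs_d0_coeff_le:
  assumes "0 \<le> mu" "mu \<le> 1" "\<forall>k\<in>{1..K}. 0 \<le> p k \<and> p k \<le> 1"
    and "x \<in> std_simplex_K K" "y \<in> std_simplex_K K"
  shows "(\<Sum>k=0..K. \<bar>d0_coeff K mu p x y k\<bar>) \<le> 3"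
proof -
  have w_nonneg: "0 \<le> adopt_weight K mu x k" if "k \<le> K" for k
    using assms(1,2) std_simplex_K_nonneg[OF assms(4) that] by (rule adopt_weight_nonneg)
  have "\<bar>d0_coeff K mu p x y 0\<bar> \<le> (\<Sum>j=1..K. \<bar>adopt_weight K mu x j * p j\<bar>)"
    unfolding d0_coeff_def by (simp add: sum_abs)
  also have "\<dots> \<le> (\<Sum>j=1..K. adopt_weight K mu x j)"
    using assms(3) w_nonneg by (intro sum_mono) (simp add: abs_mult mult_left_le)
  also have "\<dots> \<le> 1"
    using assms by (intro sum_adopt_weight_le_one)
  finally have head: "\<bar>d0_coeff K mu p x y 0\<bar> \<le> 1" .
  have "(\<Sum>k=1..K. \<bar>d0_coeff K mu p x y k\<bar>)
      \<le> (\<Sum>k=1..K. adopt_weight K mu x k + y k)"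
  proof (rule sum_mono)
    fix k assume k: "k \<in> {1..K}"
    with assms have "\<bar>p k\<bar> \<le> 1" "0 \<le> y k" "0 \<le> adopt_weight K mu x k"
      by (auto intro: std_simplex_K_nonneg w_nonneg)
    hence "\<bar>p k\<bar> * \<bar>adopt_weight K mu x k - y k\<bar> \<le> \<bar>adopt_weight K mu x k - y k\<bar>"
      "\<bar>adopt_weight K mu x k - y k\<bar> \<le> adopt_weight K mu x k + y k"
      by (simp_all add: mult_left_le_one_le)
    thus "\<bar>d0_coeff K mu p x y k\<bar> \<le> adopt_weight K mu x k + y k"
      using k by (simp add: d0_coeff_def abs_mult)
  qed
  also have "\<dots> \<le> 1 + 1"
    using sum_adopt_weight_le_one[OF assms(1,2,4)] std_simplex_K_sum_tail[OF assms(5)]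
      std_simplex_K_nonneg[OF assms(5), of 0]
    by (simp add: sum.distrib)
  finally show ?thesis
    using head by (simp add: sum.atLeast_Suc_atMost)
qed

lemma abs_diag_coeff_le:
  assumes "0 \<le> mu" "mu \<le> 1" "\<forall>k\<in>{1..K}. 0 \<le> p k \<and> p k \<le> 1"
    and "x \<in> std_simplex_K K" "y \<in> std_simplex_K K" "k \<le> K"
  shows "\<bar>diag_coeff K mu p x y k\<bar> \<le> 2"
proof (cases "k = 0")
  case False
  with assms have "\<bar>payoff_gap K p x k\<bar> \<le> 1"
    by (intro abs_payoff_gap_le_one) auto
  moreover have "\<bar>(1 - mu) * y 0 * p k\<bar> \<le> 1"
  proof -
    have "0 \<le> y 0" "y 0 \<le> 1" "0 \<le> p k" "p k \<le> 1"
      using assms False std_simplex_K_nonneg std_simplex_K_le_one by auto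
    with assms(1,2) show ?thesis
      by (auto simp: abs_mult intro!: mult_le_one)
  qed
  ultimately show ?thesis
    using False by (simp add: diag_coeff_def abs_triangle_ineq[THEN order_trans])
qed (simp add: diag_coeff_def)

lemma sum_abs_payoff_coeff_le:
  assumes "0 \<le> mu" "mu \<le> 1" "y \<in> std_simplex_K K"
  shows "(\<Sum>k=0..K. \<bar>payoff_coeff mu y k\<bar>) \<le> 1"
proof -
  have y: "0 \<le> y k" if "k \<le> K" for k
    using assms(3) that by (rule std_simplex_K_nonneg)
  have "(\<Sum>k=0..K. \<bar>payoff_coeff mu y k\<bar>) = (1 - mu) * y 0 + (\<Sum>k=1..K. y k)"
    using assms(1,2) y by (simp add: payoff_coeff_def sum.atLeast_Suc_atMost)
  also have "\<dots> \<le> y 0 + (1 - y 0)"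
    using assms(1,2) y[of 0] std_simplex_K_sum_tail[OF assms(3)]
    by (simp add: mult_left_le_one_le)
  finally show ?thesis by simp
qed

lemma abs_payoff_sum_le:
  assumes "\<forall>k\<in>{1..K}. 0 \<le> p k \<and> p k \<le> 1"
  shows "\<bar>\<Sum>j=1..K. p j * d j\<bar> \<le> sqrt (real K) * L2_set d {0..K}"
proof -
  have "\<bar>\<Sum>j=1..K. p j * d j\<bar> \<le> L2_set p {1..K} * L2_set d {1..K}"
    by (rule abs_sum_mult_le_L2_set)
  also have "\<dots> \<le> L2_set (\<lambda>_. 1) {1..K} * L2_set d {0..K}"
    using assms by (intro mult_mono L2_set_mono_abs L2_set_subset_le) auto
  finally show ?thesis by (simp add: L2_set_constant)
qed

theorem lemma6:
  fixes K :: nat and lam mu :: real and p x y :: "nat \<Rightarrow> real"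
  assumes "K \<ge> 1" and "lam > 0" and "0 < mu" and "mu \<le> 1"
    and "\<forall>k\<in>{1..K}. 0 \<le> p k \<and> p k \<le> 1"
    and "x \<in> std_simplex_K K" and "y \<in> std_simplex_K K"
  shows "enorm K (\<lambda>k. Fmap K lam mu p x k - Fmap K lam mu p y k)
           \<le> lam * (5 + sqrt (real K)) * enorm K (\<lambda>k. x k - y k)"
proof -
  define d where "d = (\<lambda>k. x k - y k)"
  define N where "N = L2_set d {0..K}"
  define P where "P = (\<Sum>j=1..K. p j * d j)"
  have mu: "0 \<le> mu" "mu \<le> 1" using assms(3,4) by auto
  have "(\<Sum>k=0..K. x k) = (\<Sum>k=0..K. y k)"
    using assms(6,7) by (simp add: std_simplex_K_def)
  hence "enorm K (\<lambda>k. Fmap K lam mu p x k - Fmap K lam mu p y k)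
      = lam * L2_set (\<lambda>k. d 0 * d0_coeff K mu p x y k + d k * diag_coeff K mu p x y k
                             + P * payoff_coeff mu y k) {0..K}"
    using assms(2)
    by (simp add: enorm_eq_L2_set Fmap_diff_decomposition L2_set_scale d_def P_def)
  also have "\<dots> \<le> lam * (N * 3 + 2 * N + sqrt (real K) * N * 1)"
  proof (intro mult_left_mono order_trans[OF L2_set_triangle_ineq] add_mono)
    show "L2_set (\<lambda>k. d 0 * d0_coeff K mu p x y k) {0..K} \<le> N * 3"
      unfolding N_def using sum_abs_d0_coeff_le[OF mu assms(5-7)]
      by (intro L2_set_scale_le abs_le_L2_set) auto
    show "L2_set (\<lambda>k. d k * diag_coeff K mu p x y k) {0..K} \<le> 2 * N"
      unfolding N_def using abs_diag_coeff_le[OF mu assms(5-7)] by (intro L2_set_mult_le) auto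
    show "L2_set (\<lambda>k. P * payoff_coeff mu y k) {0..K} \<le> sqrt (real K) * N * 1"
      unfolding N_def P_def using sum_abs_payoff_coeff_le[OF mu assms(7)]
      by (intro L2_set_scale_le abs_payoff_sum_le[OF assms(5)])
  qed (use assms(2) in auto)
  finally show ?thesis
    by (simp add: N_def enorm_eq_L2_set d_def algebra_simps)
qed

end
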